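(* Assume the Smoothness Assumption (see context) and let $\{x^k_\tau,y^k_\tau,z^k_\tau\}$ and $G^k_{x,\tau},G^k_{y,\tau}$ be generated by Algorithm 1. Let $C_{\sigma,x}=C_{\sigma,y}=0$ in the finite-sum setting and $C_{\sigma,x}=\sigma_x^2/B$, $C_{\sigma,y}=\sigma_y^2/B$ in the online setting. Then for any $k\ge0$ and $0\le\tau\le T-1$, $$\mathbb E\|G^k_{y,\tau}-\nabla_yF(x^k_\tau,y^k_\tau)\|^2\le\frac{L_y^2}M\sum_{b=0}^{\tau-1}\mathbb E\|x^k_{b+1}-x^k_b\|^2+\frac{L_y^2}M\sum_{b=0}^{\tau-1}\mathbb E\|y^k_{b+1}-y^k_b\|^2+C_{\sigma,y},$$ $$\mathbb E\|G^k_{x,\tau}-\nabla_xF(x^k_\tau,y^k_\tau)\|^2\le\frac{2L_x^2}M\sum_{b=0}^{\tau-1}\mathbb E\|x^k_{b+1}-x^k_b\|^2+\frac{2L_y^2}M\sum_{b=0}^{\tau-1}\mathbb E\|y^k_{b+1}-y^k_b\|^2+C_{\sigma,x}.$$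
   Context: Problem. Let $\mathcal X\subseteq\mathbb R^{d_x}$ and $\mathcal Y\subseteq\mathbb R^{d_y}$ be nonempty closed convex sets, $\mathbb P$ a probability distribution with support $\Xi$, $f:\mathbb R^{d_x}\times\mathbb R^{d_y}\times\Xi\to\mathbb R$, $F(x,y)=\mathbb E_{\xi\sim\mathbb P}[f(x,y;\xi)]$; problem $\min_{x\in\mathcal X}\max_{y\in\mathcal Y}F(x,y)$. Finite-sum setting: $\mathbb P$ is the empirical distribution of $N$ samples; online setting: only i.i.d. samples from $\mathbb P$ are available. Smoothness Assumption: (i) $\mathcal Y$ compact with diameter $D_{\mathcal Y}$; (ii) $\exists\ell>0$: $\mathbb E|f(x_1,y_1;\xi)-f(x_2,y_2;\xi)|\le\ell(\|x_1-x_2\|+\|y_1-y_2\|)$ on $\mathcal X\times\mathcal Y$; (iii) constants $L_x,L_y$ with, for all $x,x_i\in\mathcal X$, $y,y_i\in\mathcal Y$: $\mathbb E\|\nabla_xf(x_1,y;\xi)-\nabla_xf(x_2,y;\xi)\|^2\le L_x^2\|x_1-x_2\|^2$, $\mathbb E\|\nabla_xf(x,y_1;\xi)-\nabla_xf(x,y_2;\xi)\|^2\le L_y^2\|y_1-y_2\|^2$, $\mathbb E\|\nabla_yf(x_1,y_1;\xi)-\nabla_yf(x_2,y_2;\xi)\|^2\le L_y^2(\|x_1-x_2\|^2+\|y_1-y_2\|^2)$; (iv) $F(\cdot,y)$ is $\rho$-weakly convex on $\mathcal X$ for every $y\in\mathcal Y$; (v) $\mathbb E[\nabla f(x,y;\xi)\mid(x,y)]=\nabla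 F(x,y)$, $\mathbb E\|\nabla_xf-\nabla_xF\|^2\le\sigma_x^2$, $\mathbb E\|\nabla_yf-\nabla_yF\|^2\le\sigma_y^2$; (vi) $\max_{y\in\mathcal Y}\min_{x\in\mathcal X}F(x,y)\ge\underline F$ for some $\underline F\in\mathbb R$. Algorithm 1: Input $(x^0_0,y^0_0,z^0_0)$, positive integers $K,T,M,B$, parameters $\alpha_x,\alpha_y,\beta,r>0$. For $k=0,\dots,K-1$, $\tau=0,\dots,T-1$: if $\tau=0$, $G^k_{x,0}=\frac1B\sum_{i=1}^B\nabla_xf(x^k_0,y^k_0;\xi^k_{0,i})$, $G^k_{y,0}=\frac1B\sum_{i=1}^B\nabla_yf(x^k_0,y^k_0;\xi^k_{0,i})$ with $B$ i.i.d. samples from $\mathbb P$ (online) or all $N$ samples with $B=N$ (finite-sum); if $\tau\ge1$, with $M$ fresh i.i.d. samples $\xi^k_{\tau,i}\sim\mathbb P$, $G^k_{x,\tau}=\frac1M\sum_{i=1}^M[\nabla_xf(x^k_\tau,y^k_\tau;\xi^k_{\tau,i})-\nabla_xf(x^k_{\tau-1},y^k_{\tau-1};\xi^k_{\tau,i})]+G^k_{x,\tau-1}$ and $G^k_{y,\tau}$ analogously with $\nabla_y$. Update $x^k_{\tau+1}=\mathrm{proj}_{\mathcal X}(x^k_\tau-\alpha_x[G^k_{x,\tau}+r(x^k_\tau-z^k_\tau)])$, $y^k_{\tau+1}=\mathrm{proj}_{\mathcal Y}(y^k_\tau+\alpha_yG^k_{y,\tau})$, $z^k_{\tau+1}=z^k_\tau+\beta(x^k_{\tau+1}-z^k_\tau)$;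 then $(x^{k+1}_0,y^{k+1}_0,z^{k+1}_0)=(x^k_T,y^k_T,z^k_T)$. Expectations are over all randomness of the algorithm. *)

theory Defs
  imports "HOL-Probability.Probability"
begin

definition Fexp :: "'a measure \<Rightarrow> ('x \<Rightarrow> 'y \<Rightarrow> 'a \<Rightarrow> real) \<Rightarrow> 'x \<Rightarrow> 'y \<Rightarrow> real" where
  "Fexp P f x y = (\<integral>\<xi>. f x y \<xi> \<partial>P)"

definition empirical :: "nat \<Rightarrow> (nat \<Rightarrow> 'a) \<Rightarrow> 'a measure" where
  "empirical N data = measure_pmf (map_pmf data (pmf_of_set {..<N}))"

record ('x, 'y) alg_state =
  sx :: 'x
  sy :: 'y
  sz :: 'x
  sGx :: 'x
  sGy :: 'y

text \<open>Sample used in the anchor (tau = 0) step: in the online setting the i-th fresh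
  i.i.d. sample omega(k,0,i), in the finite-sum setting the i-th data point (with B = N).
  All samples of the run are omega(k,tau,i), indexed by epoch k, inner step tau, and i.\<close>
definition anchor_sample :: "bool \<Rightarrow> (nat \<Rightarrow> 'a) \<Rightarrow> (nat \<times> nat \<times> nat \<Rightarrow> 'a) \<Rightarrow> nat \<Rightarrow> nat \<Rightarrow> 'a" where
  "anchor_sample online data \<omega> k i = (if online then \<omega> (k, 0, i) else data i)"

fun alg :: "('x::euclidean_space \<Rightarrow> 'y::euclidean_space \<Rightarrow> 'a \<Rightarrow> 'x) \<Rightarrow> ('x \<Rightarrow> 'y \<Rightarrow> 'a \<Rightarrow> 'y)
    \<Rightarrow> 'x set \<Rightarrow> 'y set \<Rightarrow> real \<Rightarrow> real \<Rightarrow> real \<Rightarrow> real \<Rightarrow> nat \<Rightarrow> nat \<Rightarrow> nat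
    \<Rightarrow> bool \<Rightarrow> (nat \<Rightarrow> 'a) \<Rightarrow> 'x \<Rightarrow> 'y \<Rightarrow> 'x \<Rightarrow> (nat \<times> nat \<times> nat \<Rightarrow> 'a)
    \<Rightarrow> nat \<Rightarrow> nat \<Rightarrow> ('x, 'y) alg_state" where
  "alg gx gy X Y ax ay \<beta> r T M B online data x0 y0 z0 \<omega> 0 0 =
     \<lparr> sx = x0, sy = y0, sz = z0,
       sGx = (1 / real B) *\<^sub>R (\<Sum>i<B. gx x0 y0 (anchor_sample online data \<omega> 0 i)),
       sGy = (1 / real B) *\<^sub>R (\<Sum>i<B. gy x0 y0 (anchor_sample online data \<omega> 0 i)) \<rparr>"
| "alg gx gy X Y ax ay \<beta> r T M B online data x0 y0 z0 \<omega> (Suc k) 0 =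
     (let s = alg gx gy X Y ax ay \<beta> r T M B online data x0 y0 z0 \<omega> k T in
      \<lparr> sx = sx s, sy = sy s, sz = sz s,
        sGx = (1 / real B) *\<^sub>R (\<Sum>i<B. gx (sx s) (sy s) (anchor_sample online data \<omega> (Suc k) i)),
        sGy = (1 / real B) *\<^sub>R (\<Sum>i<B. gy (sx s) (sy s) (anchor_sample online data \<omega> (Suc k) i)) \<rparr>)"
| "alg gx gy X Y ax ay \<beta> r T M B online data x0 y0 z0 \<omega> k (Suc \<tau>) =
     (let s = alg gx gy X Y ax ay \<beta> r T M B online data x0 y0 z0 \<omega> k \<tau>;
          x = sx s; y = sy s; z = sz s;
          x' = closest_point X (x - ax *\<^sub>R (sGx s + r *\<^sub>R (x - z)));
          y' = closest_point Y (y + ay *\<^sub>R sGy s);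
          z' = z + \<beta> *\<^sub>R (x' - z)
      in \<lparr> sx = x', sy = y', sz = z',
           sGx = (1 / real M) *\<^sub>R (\<Sum>i<M. gx x' y' (\<omega> (k, Suc \<tau>, i)) - gx x y (\<omega> (k, Suc \<tau>, i))) + sGx s,
           sGy = (1 / real M) *\<^sub>R (\<Sum>i<M. gy x' y' (\<omega> (k, Suc \<tau>, i)) - gy x y (\<omega> (k, Suc \<tau>, i))) + sGy s \<rparr>)"

end

theory Submission
  imports Defs
begin

text \<open>Write \<open>e\<^sub>t = G\<^sub>t - \<nabla>F(x\<^sub>t, y\<^sub>t)\<close> for the error of either estimator within an epoch.
  The recursion of Algorithm 1 gives \<open>e\<^sub>t\<^sub>+\<^sub>1 = e\<^sub>t + (1/M) \<Sum>\<^sub>i (D(\<xi>\<^sub>i) - \<bbbE> D)\<close>, where \<open>D\<close> is the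
  difference of the stochastic gradients at the new and the old iterate and the \<open>\<xi>\<^sub>i\<close> are fresh samples,
  independent of \<open>e\<^sub>t\<close> and of both iterates. All cross terms therefore vanish in expectation, so
  \<open>\<bbbE>|e\<^sub>t\<^sub>+\<^sub>1|\<^sup>2 \<le> \<bbbE>|e\<^sub>t|\<^sup>2 + (1/M) \<bbbE>|D|\<^sup>2\<close>, and the mean-square Lipschitz bounds estimate \<open>\<bbbE>|D|\<^sup>2\<close> by the
  squared lengths of the steps. Telescoping leads back to the anchor step, where the error is zero
  (finite sum: exact gradient) or an average of \<open>B\<close> independent centred terms (online: variance
  \<open>\<sigma>\<^sup>2/B\<close>).\<close>

section \<open>Mean-square error of averages over fresh samples\<close>

lemma nn_integral_sq_norm_add_mean_zero:
  fixes w :: "'a \<Rightarrow> 'v::euclidean_space"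
  assumes "prob_space P" and w_meas: "w \<in> borel_measurable P" and w_int: "integrable P w"
    and w_mean: "(\<integral>\<xi>. w \<xi> \<partial>P) = 0"
  shows "(\<integral>\<^sup>+\<xi>. ennreal ((norm (c + w \<xi>))\<^sup>2) \<partial>P)
    \<le> ennreal ((norm c)\<^sup>2) + (\<integral>\<^sup>+\<xi>. ennreal ((norm (w \<xi>))\<^sup>2) \<partial>P)"
proof (cases "(\<integral>\<^sup>+\<xi>. ennreal ((norm (w \<xi>))\<^sup>2) \<partial>P) = \<infinity>")
  case False
  interpret prob_space P by fact
  obtain v where v: "(\<integral>\<^sup>+\<xi>. ennreal ((norm (w \<xi>))\<^sup>2) \<partial>P) = ennreal v" "v \<ge> 0"
    using False by (cases "\<integral>\<^sup>+\<xi>. ennreal ((norm (w \<xi>))\<^sup>2) \<partial>P") auto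
  have sq_int: "integrable P (\<lambda>\<xi>. (norm (w \<xi>))\<^sup>2)"
    using w_meas by (intro integrableI_nn_integral_finite[OF _ _ v(1)]) auto
  have expand: "(norm (c + w \<xi>))\<^sup>2 = (norm c)\<^sup>2 + 2 * (c \<bullet> w \<xi>) + (norm (w \<xi>))\<^sup>2" for \<xi>
    by (simp add: power2_norm_eq_inner inner_add_left inner_add_right inner_commute)
  have "(\<integral>\<xi>. (norm (c + w \<xi>))\<^sup>2 \<partial>P) = (norm c)\<^sup>2 + v"
    using sq_int w_int w_mean nn_integral_eq_integral[OF sq_int] v
    by (simp add: expand prob_space)
  moreover have "integrable P (\<lambda>\<xi>. (norm (c + w \<xi>))\<^sup>2)"
    using sq_int w_int by (simp add: expand)
  ultimately have "(\<integral>\<^sup>+\<xi>. ennreal ((norm (c + w \<xi>))\<^sup>2) \<partial>P) = ennreal ((norm c)\<^sup>2 + v)"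
    by (simp add: nn_integral_eq_integral)
  then show ?thesis
    using v by (simp add: ennreal_plus)
qed simp

lemma nn_integral_sq_norm_centered_le:
  fixes w :: "'a \<Rightarrow> 'v::euclidean_space"
  assumes "prob_space P" and w_meas: "w \<in> borel_measurable P" and w_int: "integrable P w"
  shows "(\<integral>\<^sup>+\<xi>. ennreal ((norm (w \<xi> - (\<integral>\<zeta>. w \<zeta> \<partial>P)))\<^sup>2) \<partial>P)
    \<le> (\<integral>\<^sup>+\<xi>. ennreal ((norm (w \<xi>))\<^sup>2) \<partial>P)"
proof (cases "(\<integral>\<^sup>+\<xi>. ennreal ((norm (w \<xi>))\<^sup>2) \<partial>P) = \<infinity>")
  case False
  interpret prob_space P by fact
  define c where "c = (\<integral>\<zeta>. w \<zeta> \<partial>P)"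
  obtain v where v: "(\<integral>\<^sup>+\<xi>. ennreal ((norm (w \<xi>))\<^sup>2) \<partial>P) = ennreal v" "v \<ge> 0"
    using False by (cases "\<integral>\<^sup>+\<xi>. ennreal ((norm (w \<xi>))\<^sup>2) \<partial>P") auto
  have sq_int: "integrable P (\<lambda>\<xi>. (norm (w \<xi>))\<^sup>2)"
    using w_meas by (intro integrableI_nn_integral_finite[OF _ _ v(1)]) auto
  have expand: "(norm (w \<xi> - c))\<^sup>2 = (norm c)\<^sup>2 - 2 * (c \<bullet> w \<xi>) + (norm (w \<xi>))\<^sup>2" for \<xi>
    by (simp add: power2_norm_eq_inner inner_diff_left inner_diff_right inner_commute)
  have "(\<integral>\<xi>. (norm (w \<xi> - c))\<^sup>2 \<partial>P) = v - (norm c)\<^sup>2"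
    unfolding expand using sq_int w_int nn_integral_eq_integral[OF sq_int] v
    by (simp add: prob_space c_def power2_norm_eq_inner)
  moreover have "integrable P (\<lambda>\<xi>. (norm (w \<xi> - c))\<^sup>2)"
    using sq_int w_int by (simp add: expand)
  ultimately have "(\<integral>\<^sup>+\<xi>. ennreal ((norm (w \<xi> - c))\<^sup>2) \<partial>P) = ennreal (v - (norm c)\<^sup>2)"
    by (simp add: nn_integral_eq_integral)
  then show ?thesis
    using v by (simp add: c_def ennreal_leI)
qed simp

text \<open>Resampling coordinate \<open>j\<close> independently of the others leaves the product measure unchanged,
  so one may integrate over \<open>w j\<close> first, with \<open>U w\<close> and \<open>V w\<close> frozen.\<close>
lemma PiM_nn_integral_sq_norm_add_fresh_le:
  fixes U :: "('i \<Rightarrow> 'a) \<Rightarrow> 'v::euclidean_space" and V :: "('i \<Rightarrow> 'a) \<Rightarrow> 'a \<Rightarrow> 'v"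
  assumes P: "prob_space P"
    and U_meas[measurable]: "U \<in> borel_measurable (PiM UNIV (\<lambda>_. P))"
    and V_meas[measurable]: "(\<lambda>(w, \<xi>). V w \<xi>) \<in> borel_measurable (PiM UNIV (\<lambda>_. P) \<Otimes>\<^sub>M P)"
    and U_indep: "\<And>w c. U (w(j := c)) = U w"
    and V_indep: "\<And>w c. V (w(j := c)) = V w"
    and V_int: "\<And>w. integrable P (V w)"
    and V_mean: "\<And>w. (\<integral>\<xi>. V w \<xi> \<partial>P) = 0"
  shows "(\<integral>\<^sup>+w. ennreal ((norm (U w + V w (w j)))\<^sup>2) \<partial>PiM UNIV (\<lambda>_. P))
     \<le> (\<integral>\<^sup>+w. ennreal ((norm (U w))\<^sup>2) \<partial>PiM UNIV (\<lambda>_. P))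
       + (\<integral>\<^sup>+w. (\<integral>\<^sup>+\<xi>. ennreal ((norm (V w \<xi>))\<^sup>2) \<partial>P) \<partial>PiM UNIV (\<lambda>_. P))"
proof -
  let ?\<Omega> = "PiM UNIV (\<lambda>_::'i. P)"
  interpret P: prob_space P by fact
  interpret \<Omega>: prob_space ?\<Omega> using P by (intro prob_space_PiM)
  interpret P\<Omega>: pair_sigma_finite P ?\<Omega> by unfold_locales
  have resample: "distr (P \<Otimes>\<^sub>M ?\<Omega>) ?\<Omega> (\<lambda>(\<xi>, w). w(j := \<xi>)) = ?\<Omega>"
    using distr_pair_PiM_eq_PiM[of UNIV "\<lambda>_. P" j] P by simp
  have upd_meas: "(\<lambda>(\<xi>, w). w(j := \<xi>)) \<in> measurable (P \<Otimes>\<^sub>M ?\<Omega>) ?\<Omega>"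
    using measurable_fun_upd[where J=UNIV and N="P \<Otimes>\<^sub>M ?\<Omega>" and M="\<lambda>_. P" and i=j
        and f=snd and h=fst] by (simp add: split_beta')
  have V_sample_meas: "(\<lambda>w. V w (w j)) \<in> borel_measurable ?\<Omega>"
    using measurable_comp[OF _ V_meas, of "\<lambda>w. (w, w j)"] by (simp add: o_def)
  have V_swap_meas: "(\<lambda>p. V (snd p) (fst p)) \<in> borel_measurable (P \<Otimes>\<^sub>M ?\<Omega>)"
    using measurable_comp[OF _ V_meas, of "\<lambda>p. (snd p, fst p)"] by (simp add: o_def split_beta')
  have V_slice_meas: "V w \<in> borel_measurable P" if "w \<in> space ?\<Omega>" for w
    using measurable_comp[OF _ V_meas, of "\<lambda>\<xi>. (w, \<xi>)"] that by (simp add: o_def)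
  have "(\<integral>\<^sup>+w. ennreal ((norm (U w + V w (w j)))\<^sup>2) \<partial>?\<Omega>)
     = (\<integral>\<^sup>+p. ennreal ((norm (U (snd p) + V (snd p) (fst p)))\<^sup>2) \<partial>(P \<Otimes>\<^sub>M ?\<Omega>))"
    by (subst (1) resample[symmetric], subst nn_integral_distr[OF upd_meas])
      (use V_sample_meas in \<open>auto simp: U_indep V_indep split_beta intro!: nn_integral_cong\<close>)
  also have "\<dots> = (\<integral>\<^sup>+w. (\<integral>\<^sup>+\<xi>. ennreal ((norm (U w + V w \<xi>))\<^sup>2) \<partial>P) \<partial>?\<Omega>)"
    using V_swap_meas by (subst P\<Omega>.nn_integral_snd[symmetric]) simp_all
  also have "\<dots> \<le> (\<integral>\<^sup>+w. ennreal ((norm (U w))\<^sup>2) + (\<integral>\<^sup>+\<xi>. ennreal ((norm (V w \<xi>))\<^sup>2) \<partial>P) \<partial>?\<Omega>)"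
    by (intro nn_integral_mono nn_integral_sq_norm_add_mean_zero[OF P V_slice_meas V_int V_mean])
  also have "\<dots> = (\<integral>\<^sup>+w. ennreal ((norm (U w))\<^sup>2) \<partial>?\<Omega>)
      + (\<integral>\<^sup>+w. (\<integral>\<^sup>+\<xi>. ennreal ((norm (V w \<xi>))\<^sup>2) \<partial>P) \<partial>?\<Omega>)"
    by (intro nn_integral_add) (auto intro: P.borel_measurable_nn_integral)
  finally show ?thesis .
qed

lemma PiM_nn_integral_sq_norm_add_sum_fresh_le:
  fixes U :: "('i \<Rightarrow> 'a) \<Rightarrow> 'v::euclidean_space" and V :: "('i \<Rightarrow> 'a) \<Rightarrow> 'a \<Rightarrow> 'v"
  assumes P: "prob_space P"
    and U_meas[measurable]: "U \<in> borel_measurable (PiM UNIV (\<lambda>_. P))"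
    and V_meas[measurable]: "(\<lambda>(w, \<xi>). V w \<xi>) \<in> borel_measurable (PiM UNIV (\<lambda>_. P) \<Otimes>\<^sub>M P)"
    and inj: "inj_on js {..<n}"
    and U_indep: "\<And>w c i. i < n \<Longrightarrow> U (w(js i := c)) = U w"
    and V_indep: "\<And>w c i. i < n \<Longrightarrow> V (w(js i := c)) = V w"
    and V_int: "\<And>w. integrable P (V w)"
    and V_mean: "\<And>w. (\<integral>\<xi>. V w \<xi> \<partial>P) = 0"
  shows "(\<integral>\<^sup>+w. ennreal ((norm (U w + (\<Sum>i<n. V w (w (js i)))))\<^sup>2) \<partial>PiM UNIV (\<lambda>_. P))
     \<le> (\<integral>\<^sup>+w. ennreal ((norm (U w))\<^sup>2) \<partial>PiM UNIV (\<lambda>_. P))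
       + of_nat n * (\<integral>\<^sup>+w. (\<integral>\<^sup>+\<xi>. ennreal ((norm (V w \<xi>))\<^sup>2) \<partial>P) \<partial>PiM UNIV (\<lambda>_. P))"
  using inj U_indep V_indep
proof (induction n)
  case (Suc n)
  let ?\<Omega> = "PiM UNIV (\<lambda>_::'i. P)"
  let ?R = "\<integral>\<^sup>+w. (\<integral>\<^sup>+\<xi>. ennreal ((norm (V w \<xi>))\<^sup>2) \<partial>P) \<partial>?\<Omega>"
  define U' where "U' w = U w + (\<Sum>i<n. V w (w (js i)))" for w
  have "(\<lambda>w. V w (w (js i))) \<in> borel_measurable ?\<Omega>" for i
    using measurable_comp[OF _ V_meas, of "\<lambda>w. (w, w (js i))"] by (simp add: o_def)
  then have U'_meas: "U' \<in> borel_measurable ?\<Omega>"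
    unfolding U'_def by measurable
  have U_indep_n: "U (w(js n := c)) = U w" and V_indep_n: "V (w(js n := c)) = V w" for w c
    using Suc.prems(2,3)[OF lessI] by (simp_all add: fun_upd_def)
  have U'_indep: "U' (w(js n := c)) = U' w" for w c
  proof -
    have "js i \<noteq> js n" if "i < n" for i
      using Suc.prems(1) that by (auto simp: inj_on_def)
    then show ?thesis
      unfolding U'_def by (auto simp: U_indep_n V_indep_n intro!: sum.cong)
  qed
  have "(\<integral>\<^sup>+w. ennreal ((norm (U w + (\<Sum>i<Suc n. V w (w (js i)))))\<^sup>2) \<partial>?\<Omega>)
      = (\<integral>\<^sup>+w. ennreal ((norm (U' w + V w (w (js n))))\<^sup>2) \<partial>?\<Omega>)"
    by (simp add: U'_def add.assoc)
  also have "\<dots> \<le> (\<integral>\<^sup>+w. ennreal ((norm (U' w))\<^sup>2) \<partial>?\<Omega>) + ?R"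
    by (intro PiM_nn_integral_sq_norm_add_fresh_le[OF P U'_meas V_meas U'_indep V_indep_n V_int V_mean])
  also have "\<dots> \<le> (\<integral>\<^sup>+w. ennreal ((norm (U w))\<^sup>2) \<partial>?\<Omega>) + of_nat n * ?R + ?R"
    unfolding U'_def using Suc.prems by (intro add_right_mono Suc.IH) (auto intro: inj_on_subset)
  finally show ?case
    by (simp add: algebra_simps)
qed simp

lemma PiM_nn_integral_sq_norm_minibatch_le:
  fixes U :: "('i \<Rightarrow> 'a) \<Rightarrow> 'v::euclidean_space" and D :: "('i \<Rightarrow> 'a) \<Rightarrow> 'a \<Rightarrow> 'v"
  assumes P: "prob_space P"
    and U_meas[measurable]: "U \<in> borel_measurable (PiM UNIV (\<lambda>_. P))"
    and D_meas[measurable]: "(\<lambda>(w, \<xi>). D w \<xi>) \<in> borel_measurable (PiM UNIV (\<lambda>_. P) \<Otimes>\<^sub>M P)"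
    and D_int: "\<And>w. integrable P (D w)"
    and inj: "inj_on js {..<n}" and n: "n > 0"
    and U_indep: "\<And>w c i. i < n \<Longrightarrow> U (w(js i := c)) = U w"
    and D_indep: "\<And>w c i. i < n \<Longrightarrow> D (w(js i := c)) = D w"
  shows "(\<integral>\<^sup>+w. ennreal ((norm (U w
            + (1 / real n) *\<^sub>R (\<Sum>i<n. D w (w (js i)) - (\<integral>\<xi>. D w \<xi> \<partial>P))))\<^sup>2) \<partial>PiM UNIV (\<lambda>_. P))
     \<le> (\<integral>\<^sup>+w. ennreal ((norm (U w))\<^sup>2) \<partial>PiM UNIV (\<lambda>_. P))
       + ennreal (1 / real n)
         * (\<integral>\<^sup>+w. (\<integral>\<^sup>+\<xi>. ennreal ((norm (D w \<xi> - (\<integral>\<zeta>. D w \<zeta> \<partial>P)))\<^sup>2) \<partial>P) \<partial>PiM UNIV (\<lambda>_. P))"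
proof -
  let ?\<Omega> = "PiM UNIV (\<lambda>_::'i. P)"
  interpret P: prob_space P by fact
  define V where "V w \<xi> = (1 / real n) *\<^sub>R (D w \<xi> - (\<integral>\<zeta>. D w \<zeta> \<partial>P))" for w \<xi>
  have "(\<lambda>w. \<integral>\<zeta>. D w \<zeta> \<partial>P) \<in> borel_measurable ?\<Omega>"
    by (rule P.borel_measurable_lebesgue_integral) simp
  then have V_meas: "(\<lambda>(w, \<xi>). V w \<xi>) \<in> borel_measurable (?\<Omega> \<Otimes>\<^sub>M P)"
    unfolding V_def split_beta' by measurable
  have V_mean: "(\<integral>\<xi>. V w \<xi> \<partial>P) = 0" for w
    using D_int by (simp add: V_def P.prob_space)
  have sq: "ennreal ((norm (V w \<xi>))\<^sup>2)
      = ennreal (1 / (real n)\<^sup>2) * ennreal ((norm (D w \<xi> - (\<integral>\<zeta>. D w \<zeta> \<partial>P)))\<^sup>2)" for w \<xi>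
    by (simp add: V_def ennreal_mult[symmetric] power_mult_distrib power_divide)
  have "(\<lambda>\<xi>. D w \<xi>) \<in> borel_measurable P" if "w \<in> space ?\<Omega>" for w
    using measurable_comp[OF _ D_meas, of "\<lambda>\<xi>. (w, \<xi>)"] that by (simp add: o_def)
  then have inner: "(\<integral>\<^sup>+\<xi>. ennreal ((norm (V w \<xi>))\<^sup>2) \<partial>P)
      = ennreal (1 / (real n)\<^sup>2) * (\<integral>\<^sup>+\<xi>. ennreal ((norm (D w \<xi> - (\<integral>\<zeta>. D w \<zeta> \<partial>P)))\<^sup>2) \<partial>P)"
    if "w \<in> space ?\<Omega>" for w
    unfolding sq using that by (intro nn_integral_cmult) measurable
  have "(\<integral>\<^sup>+w. (\<integral>\<^sup>+\<xi>. ennreal ((norm (V w \<xi>))\<^sup>2) \<partial>P) \<partial>?\<Omega>)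
      = ennreal (1 / (real n)\<^sup>2)
        * (\<integral>\<^sup>+w. (\<integral>\<^sup>+\<xi>. ennreal ((norm (D w \<xi> - (\<integral>\<zeta>. D w \<zeta> \<partial>P)))\<^sup>2) \<partial>P) \<partial>?\<Omega>)"
    by (simp add: inner nn_integral_cong[OF inner] nn_integral_cmult P.borel_measurable_nn_integral)
  moreover have "of_nat n * ennreal (1 / (real n)\<^sup>2) = ennreal (1 / real n)"
    using n by (simp add: ennreal_of_nat_eq_real_of_nat ennreal_mult[symmetric] power2_eq_square)
  moreover have "(1 / real n) *\<^sub>R (\<Sum>i<n. D w (w (js i)) - (\<integral>\<xi>. D w \<xi> \<partial>P))
      = (\<Sum>i<n. V w (w (js i)))" for w
    by (simp add: V_def scaleR_sum_right)
  ultimately show ?thesis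
    using PiM_nn_integral_sq_norm_add_sum_fresh_le[OF P U_meas V_meas inj U_indep _ _ V_mean]
      D_indep D_int by (simp add: V_def mult.assoc[symmetric])
qed

section \<open>Recursive gradient estimators\<close>

lemma borel_measurable_comp_split3:
  fixes g :: "'x::euclidean_space \<Rightarrow> 'y::euclidean_space \<Rightarrow> 'a \<Rightarrow> 'z::euclidean_space"
  assumes g: "(\<lambda>(x, y, \<xi>). g x y \<xi>) \<in> borel_measurable (borel \<Otimes>\<^sub>M borel \<Otimes>\<^sub>M P)"
    and [measurable]: "f1 \<in> borel_measurable N" "f2 \<in> borel_measurable N" "h \<in> measurable N P"
  shows "(\<lambda>n. g (f1 n) (f2 n) (h n)) \<in> borel_measurable N"
  using measurable_comp[OF _ g, of "\<lambda>n. (f1 n, f2 n, h n)"] by (simp add: o_def)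

lemma integral_empirical:
  fixes f :: "'a \<Rightarrow> 'z::euclidean_space"
  assumes "N > 0"
  shows "(\<integral>\<xi>. f \<xi> \<partial>empirical N data) = (1 / real N) *\<^sub>R (\<Sum>i<N. f (data i))"
proof -
  have set: "set_pmf (pmf_of_set {..<N}) = {..<N}"
    using assms by (intro set_pmf_of_set) auto
  have "(\<integral>\<xi>. f \<xi> \<partial>empirical N data) = (\<Sum>i<N. pmf (pmf_of_set {..<N}) i *\<^sub>R f (data i))"
    unfolding empirical_def by (simp, rule integral_measure_pmf) (auto simp: set)
  also have "\<dots> = (1 / real N) *\<^sub>R (\<Sum>i<N. f (data i))"
    using assms by (auto simp: scaleR_sum_right lessThan_empty_iff intro!: sum.cong)
  finally show ?thesis .
qed

text \<open>Both estimators \<open>G\<^sub>x\<close> and \<open>G\<^sub>y\<close> of Algorithm 1 are instances, with \<open>g\<close> the corresponding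
  stochastic partial gradient.\<close>
locale recursive_estimator =
  fixes P :: "'a measure"
    and g :: "'x::euclidean_space \<Rightarrow> 'y::euclidean_space \<Rightarrow> 'a \<Rightarrow> 'z::euclidean_space"
    and gF :: "'x \<Rightarrow> 'y \<Rightarrow> 'z"
    and X :: "'x set" and Y :: "'y set"
    and x :: "nat \<Rightarrow> nat \<Rightarrow> (nat \<times> nat \<times> nat \<Rightarrow> 'a) \<Rightarrow> 'x"
    and y :: "nat \<Rightarrow> nat \<Rightarrow> (nat \<times> nat \<times> nat \<Rightarrow> 'a) \<Rightarrow> 'y"
    and G :: "nat \<Rightarrow> nat \<Rightarrow> (nat \<times> nat \<times> nat \<Rightarrow> 'a) \<Rightarrow> 'z"
    and M :: nat
  assumes prob_space_P: "prob_space P"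
    and g_measurable: "(\<lambda>(x, y, \<xi>). g x y \<xi>) \<in> borel_measurable (borel \<Otimes>\<^sub>M borel \<Otimes>\<^sub>M P)"
    and g_integrable: "\<And>x y. integrable P (g x y)"
    and g_mean: "\<And>x y. (\<integral>\<xi>. g x y \<xi> \<partial>P) = gF x y"
    and x_measurable: "\<And>k t. x k t \<in> borel_measurable (PiM UNIV (\<lambda>_. P))"
    and y_measurable: "\<And>k t. y k t \<in> borel_measurable (PiM UNIV (\<lambda>_. P))"
    and G_measurable: "\<And>k t. G k t \<in> borel_measurable (PiM UNIV (\<lambda>_. P))"
    and x_in: "\<And>k t w. x k t w \<in> X" and y_in: "\<And>k t w. y k t w \<in> Y"
    and x_adapted: "\<And>k t w w'. (\<And>k' t' i. k' < k \<or> k' = k \<and> t' < t \<Longrightarrow> w (k', t', i) = w' (k', t', i))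
      \<Longrightarrow> x k t w = x k t w'"
    and y_adapted: "\<And>k t w w'. (\<And>k' t' i. k' < k \<or> k' = k \<and> t' < t \<Longrightarrow> w (k', t', i) = w' (k', t', i))
      \<Longrightarrow> y k t w = y k t w'"
    and G_adapted: "\<And>k t w w'. (\<And>k' t' i. k' < k \<or> k' = k \<and> t' \<le> t \<Longrightarrow> w (k', t', i) = w' (k', t', i))
      \<Longrightarrow> G k t w = G k t w'"
    and G_Suc: "\<And>w k t. G k (Suc t) w = (1 / real M) *\<^sub>R (\<Sum>i<M.
        g (x k (Suc t) w) (y k (Suc t) w) (w (k, Suc t, i)) - g (x k t w) (y k t w) (w (k, Suc t, i)))
      + G k t w"
    and M_pos: "M > 0"
begin

abbreviation "sample_space \<equiv> PiM UNIV (\<lambda>_::nat \<times> nat \<times> nat. P)"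

definition mse :: "nat \<Rightarrow> nat \<Rightarrow> ennreal" where
  "mse k t = (\<integral>\<^sup>+w. ennreal ((norm (G k t w - gF (x k t w) (y k t w)))\<^sup>2) \<partial>sample_space)"

interpretation P: prob_space P by (rule prob_space_P)

lemmas [measurable] = x_measurable y_measurable G_measurable

lemma g_comp_measurable[measurable (raw)]:
  "f1 \<in> borel_measurable N \<Longrightarrow> f2 \<in> borel_measurable N \<Longrightarrow> h \<in> measurable N P
    \<Longrightarrow> (\<lambda>n. g (f1 n) (f2 n) (h n)) \<in> borel_measurable N"
  by (rule borel_measurable_comp_split3[OF g_measurable])

lemma gF_comp_measurable[measurable (raw)]:
  assumes [measurable]: "f1 \<in> borel_measurable N" "f2 \<in> borel_measurable N"
  shows "(\<lambda>n. gF (f1 n) (f2 n)) \<in> borel_measurable N"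
proof -
  have "(\<lambda>n. \<integral>\<xi>. g (f1 n) (f2 n) \<xi> \<partial>P) \<in> borel_measurable N"
    by (rule P.borel_measurable_lebesgue_integral) (simp add: split_beta')
  then show ?thesis
    by (simp add: g_mean)
qed

lemma x_upd: "t \<le> t' \<Longrightarrow> x k t (w((k, t', i) := c)) = x k t w"
  and y_upd: "t \<le> t' \<Longrightarrow> y k t (w((k, t', i) := c)) = y k t w"
  and G_upd: "t < t' \<Longrightarrow> G k t (w((k, t', i) := c)) = G k t w"
  by (auto intro!: x_adapted y_adapted G_adapted)

lemma mse_Suc_le:
  assumes g_lipschitz: "\<And>x x' y y'. x \<in> X \<Longrightarrow> x' \<in> X \<Longrightarrow> y \<in> Y \<Longrightarrow> y' \<in> Y \<Longrightarrow>
      (\<integral>\<^sup>+\<xi>. ennreal ((norm (g x' y' \<xi> - g x y \<xi>))\<^sup>2) \<partial>P)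
        \<le> ennreal (c1 * (norm (x' - x))\<^sup>2) + ennreal (c2 * (norm (y' - y))\<^sup>2)"
    and c: "c1 \<ge> 0" "c2 \<ge> 0"
  shows "mse k (Suc t) \<le> mse k t
    + ennreal (c1 / real M) * (\<integral>\<^sup>+w. ennreal ((norm (x k (Suc t) w - x k t w))\<^sup>2) \<partial>sample_space)
    + ennreal (c2 / real M) * (\<integral>\<^sup>+w. ennreal ((norm (y k (Suc t) w - y k t w))\<^sup>2) \<partial>sample_space)"
proof -
  define U where "U w = G k t w - gF (x k t w) (y k t w)" for w
  define D where "D w \<xi> = g (x k (Suc t) w) (y k (Suc t) w) \<xi> - g (x k t w) (y k t w) \<xi>" for w \<xi>
  define dx where "dx w = ennreal ((norm (x k (Suc t) w - x k t w))\<^sup>2)" for w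
  define dy where "dy w = ennreal ((norm (y k (Suc t) w - y k t w))\<^sup>2)" for w
  have D_mean: "(\<integral>\<xi>. D w \<xi> \<partial>P) = gF (x k (Suc t) w) (y k (Suc t) w) - gF (x k t w) (y k t w)" for w
    using g_integrable by (simp add: D_def g_mean)
  have error_split: "G k (Suc t) w - gF (x k (Suc t) w) (y k (Suc t) w)
      = U w + (1 / real M) *\<^sub>R (\<Sum>i<M. D w (w (k, Suc t, i)) - (\<integral>\<xi>. D w \<xi> \<partial>P))" for w
    unfolding D_mean using M_pos by (simp add: G_Suc U_def D_def sum_subtractf scaleR_diff_right sum_constant_scaleR)
  have variance: "(\<integral>\<^sup>+\<xi>. ennreal ((norm (D w \<xi> - (\<integral>\<zeta>. D w \<zeta> \<partial>P)))\<^sup>2) \<partial>P)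
      \<le> ennreal c1 * dx w + ennreal c2 * dy w" for w
  proof -
    have "(\<integral>\<^sup>+\<xi>. ennreal ((norm (D w \<xi> - (\<integral>\<zeta>. D w \<zeta> \<partial>P)))\<^sup>2) \<partial>P)
        \<le> (\<integral>\<^sup>+\<xi>. ennreal ((norm (D w \<xi>))\<^sup>2) \<partial>P)"
      using g_integrable by (intro nn_integral_sq_norm_centered_le[OF prob_space_P]) (auto simp: D_def)
    also have "\<dots> \<le> ennreal c1 * dx w + ennreal c2 * dy w"
      using g_lipschitz[OF x_in x_in y_in y_in] c by (simp add: D_def dx_def dy_def ennreal_mult)
    finally show ?thesis .
  qed
  have "mse k (Suc t) \<le> mse k t
      + ennreal (1 / real M)
        * (\<integral>\<^sup>+w. (\<integral>\<^sup>+\<xi>. ennreal ((norm (D w \<xi> - (\<integral>\<zeta>. D w \<zeta> \<partial>P)))\<^sup>2) \<partial>P) \<partial>sample_space)"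
    unfolding mse_def error_split U_def[symmetric]
  proof (rule PiM_nn_integral_sq_norm_minibatch_le[OF prob_space_P])
    show "inj_on (\<lambda>i. (k, Suc t, i)) {..<M}"
      by (simp add: inj_on_def)
  qed (use g_integrable M_pos in \<open>auto simp: U_def D_def split_beta' x_upd y_upd G_upd\<close>)
  also have "\<dots> \<le> mse k t + ennreal (1 / real M) * (\<integral>\<^sup>+w. ennreal c1 * dx w + ennreal c2 * dy w \<partial>sample_space)"
    by (intro add_left_mono mult_left_mono nn_integral_mono variance) simp
  also have "\<dots> = mse k t + ennreal (1 / real M)
      * (ennreal c1 * (\<integral>\<^sup>+w. dx w \<partial>sample_space) + ennreal c2 * (\<integral>\<^sup>+w. dy w \<partial>sample_space))"
    by (simp add: dx_def dy_def nn_integral_add nn_integral_cmult)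
  also have "\<dots> = mse k t + ennreal (c1 / real M) * (\<integral>\<^sup>+w. dx w \<partial>sample_space)
      + ennreal (c2 / real M) * (\<integral>\<^sup>+w. dy w \<partial>sample_space)"
    using c by (simp add: distrib_left ennreal_mult[symmetric] add.assoc mult.assoc[symmetric])
  finally show ?thesis
    by (simp only: dx_def dy_def)
qed

lemma mse_anchor_le:
  assumes G_anchor: "\<And>w. G k 0 w
      = (1 / real B) *\<^sub>R (\<Sum>i<B. g (x k 0 w) (y k 0 w) (anchor_sample online data w k i))"
    and g_variance: "\<And>x y. (\<integral>\<^sup>+\<xi>. ennreal ((norm (g x y \<xi> - gF x y))\<^sup>2) \<partial>P) \<le> ennreal (\<sigma>\<^sup>2)"
    and setting: "(\<not> online \<and> N > 0 \<and> P = empirical N data \<and> B = N \<and> C = 0)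
      \<or> (online \<and> C = \<sigma>\<^sup>2 / real B)"
    and B_pos: "B > 0"
  shows "mse k 0 \<le> ennreal C"
proof (cases online)
  case False
  with setting have "N > 0" "P = empirical N data" "B = N" "C = 0"
    by auto
  then have "G k 0 w = gF (x k 0 w) (y k 0 w)" for w
    using False by (simp add: G_anchor anchor_sample_def integral_empirical g_mean[symmetric])
  then show ?thesis
    by (simp add: mse_def)
next
  case True
  with setting have C: "C = \<sigma>\<^sup>2 / real B"
    by auto
  interpret \<Omega>: prob_space sample_space
    using prob_space_P by (intro prob_space_PiM)
  define D where "D w \<xi> = g (x k 0 w) (y k 0 w) \<xi>" for w \<xi>
  have error: "G k 0 w - gF (x k 0 w) (y k 0 w)
      = 0 + (1 / real B) *\<^sub>R (\<Sum>i<B. D w (w (k, 0, i)) - (\<integral>\<xi>. D w \<xi> \<partial>P))" for w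
    using True B_pos by (simp add: G_anchor D_def g_mean anchor_sample_def sum_subtractf
        scaleR_diff_right sum_constant_scaleR)
  have "mse k 0 \<le> (\<integral>\<^sup>+w. ennreal ((norm (0::'z))\<^sup>2) \<partial>sample_space)
      + ennreal (1 / real B)
        * (\<integral>\<^sup>+w. (\<integral>\<^sup>+\<xi>. ennreal ((norm (D w \<xi> - (\<integral>\<zeta>. D w \<zeta> \<partial>P)))\<^sup>2) \<partial>P) \<partial>sample_space)"
    unfolding mse_def error
  proof (rule PiM_nn_integral_sq_norm_minibatch_le[OF prob_space_P])
    show "inj_on (\<lambda>i. (k, 0, i)) {..<B}"
      by (simp add: inj_on_def)
  qed (use g_integrable B_pos in \<open>auto simp: D_def split_beta' x_upd y_upd\<close>)
  also have "\<dots> \<le> ennreal (1 / real B) * ennreal (\<sigma>\<^sup>2)"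
  proof -
    have "(\<integral>\<^sup>+w. (\<integral>\<^sup>+\<xi>. ennreal ((norm (D w \<xi> - (\<integral>\<zeta>. D w \<zeta> \<partial>P)))\<^sup>2) \<partial>P) \<partial>sample_space)
        \<le> (\<integral>\<^sup>+w. ennreal (\<sigma>\<^sup>2) \<partial>sample_space)"
      by (intro nn_integral_mono) (simp add: D_def g_mean g_variance)
    then show ?thesis
      by (simp add: \<Omega>.emeasure_space_1 mult_left_mono)
  qed
  also have "\<dots> = ennreal C"
    by (simp add: C ennreal_mult[symmetric])
  finally show ?thesis .
qed

lemma mse_le_sum:
  assumes anchor: "mse k 0 \<le> ennreal C"
    and g_lipschitz: "\<And>x x' y y'. x \<in> X \<Longrightarrow> x' \<in> X \<Longrightarrow> y \<in> Y \<Longrightarrow> y' \<in> Y \<Longrightarrow>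
      (\<integral>\<^sup>+\<xi>. ennreal ((norm (g x' y' \<xi> - g x y \<xi>))\<^sup>2) \<partial>P)
        \<le> ennreal (c1 * (norm (x' - x))\<^sup>2) + ennreal (c2 * (norm (y' - y))\<^sup>2)"
    and c: "c1 \<ge> 0" "c2 \<ge> 0"
  shows "mse k t
    \<le> ennreal (c1 / real M) * (\<Sum>b<t. \<integral>\<^sup>+w. ennreal ((norm (x k (Suc b) w - x k b w))\<^sup>2) \<partial>sample_space)
      + ennreal (c2 / real M) * (\<Sum>b<t. \<integral>\<^sup>+w. ennreal ((norm (y k (Suc b) w - y k b w))\<^sup>2) \<partial>sample_space)
      + ennreal C"
proof (induction t)
  case 0
  then show ?case
    using anchor by simp
next
  case (Suc t)
  from order_trans[OF mse_Suc_le[OF g_lipschitz c] add_right_mono[OF add_right_mono[OF Suc.IH]]]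
  show ?case
    by (simp add: distrib_left ac_simps)
qed

end

section \<open>Algorithm 1\<close>

lemma epoch_induct[case_names start restart step]:
  assumes "P 0 0" and "\<And>k. P k T \<Longrightarrow> P (Suc k) 0" and "\<And>k t. P k t \<Longrightarrow> P k (Suc t)"
  shows "P k t"
proof (induction k arbitrary: t)
  case 0
  show ?case by (induction t) (use assms in auto)
next
  case (Suc k)
  show ?case by (induction t) (use assms Suc.IH in auto)
qed

lemma measurable_anchor_sample:
  assumes "online \<or> space P = UNIV"
  shows "(\<lambda>w. anchor_sample online data w k i) \<in> measurable (PiM UNIV (\<lambda>_. P)) P"
  using assms by (cases online) (simp_all add: anchor_sample_def)

locale alg_run =
  fixes gx :: "'x::euclidean_space \<Rightarrow> 'y::euclidean_space \<Rightarrow> 'a \<Rightarrow> 'x" and gy :: "'x \<Rightarrow> 'y \<Rightarrow> 'a \<Rightarrow> 'y"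
    and X :: "'x set" and Y :: "'y set" and ax ay \<beta> r :: real and T M B :: nat
    and online :: bool and data :: "nat \<Rightarrow> 'a" and x0 :: 'x and y0 :: 'y and z0 :: 'x
begin

abbreviation "run w k t \<equiv> alg gx gy X Y ax ay \<beta> r T M B online data x0 y0 z0 w k t"

lemma alg_Suc:
  "sx (run w k (Suc t))
    = closest_point X (sx (run w k t) - ax *\<^sub>R (sGx (run w k t) + r *\<^sub>R (sx (run w k t) - sz (run w k t))))"
  "sy (run w k (Suc t)) = closest_point Y (sy (run w k t) + ay *\<^sub>R sGy (run w k t))"
  "sz (run w k (Suc t)) = sz (run w k t) + \<beta> *\<^sub>R (sx (run w k (Suc t)) - sz (run w k t))"
  "sGx (run w k (Suc t)) = (1 / real M) *\<^sub>R (\<Sum>i<M.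
      gx (sx (run w k (Suc t))) (sy (run w k (Suc t))) (w (k, Suc t, i))
      - gx (sx (run w k t)) (sy (run w k t)) (w (k, Suc t, i))) + sGx (run w k t)"
  "sGy (run w k (Suc t)) = (1 / real M) *\<^sub>R (\<Sum>i<M.
      gy (sx (run w k (Suc t))) (sy (run w k (Suc t))) (w (k, Suc t, i))
      - gy (sx (run w k t)) (sy (run w k t)) (w (k, Suc t, i))) + sGy (run w k t)"
  by (simp_all add: Let_def)

lemma alg_anchor:
  "sGx (run w k 0)
    = (1 / real B) *\<^sub>R (\<Sum>i<B. gx (sx (run w k 0)) (sy (run w k 0)) (anchor_sample online data w k i))"
  "sGy (run w k 0)
    = (1 / real B) *\<^sub>R (\<Sum>i<B. gy (sx (run w k 0)) (sy (run w k 0)) (anchor_sample online data w k i))"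
  by (cases k; simp add: Let_def)+

lemma alg_Suc_0:
  "sx (run w (Suc k) 0) = sx (run w k T)"
  "sy (run w (Suc k) 0) = sy (run w k T)"
  "sz (run w (Suc k) 0) = sz (run w k T)"
  by (simp_all add: Let_def)

lemma alg_cong_samples:
  "(\<And>k' t' i. k' < k \<or> k' = k \<and> t' \<le> t \<Longrightarrow> w (k', t', i) = w' (k', t', i)) \<Longrightarrow> run w k t = run w' k t"
proof (induction k t rule: epoch_induct[where T=T])
  case start
  then have "anchor_sample online data w 0 = anchor_sample online data w' 0"
    by (auto simp: anchor_sample_def)
  then show ?case by simp
next
  case (restart k)
  have "run w k T = run w' k T"
    using restart.prems by (intro restart.IH) auto
  moreover have "anchor_sample online data w (Suc k) = anchor_sample online data w' (Suc k)"
    using restart.prems by (auto simp: anchor_sample_def)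
  ultimately show ?case by (simp add: Let_def)
next
  case (step k t)
  have "run w k t = run w' k t"
    using step.prems by (intro step.IH) auto
  with step.prems show ?case by (simp add: Let_def)
qed

lemma alg_iterate_cong_samples:
  assumes "\<And>k' t' i. k' < k \<or> k' = k \<and> t' < t \<Longrightarrow> w (k', t', i) = w' (k', t', i)"
  shows "sx (run w k t) = sx (run w' k t) \<and> sy (run w k t) = sy (run w' k t)"
proof (cases t)
  case 0
  show ?thesis
  proof (cases k)
    case (Suc j)
    then have "run w j T = run w' j T"
      using assms by (intro alg_cong_samples) auto
    then show ?thesis
      using Suc 0 by (simp only: alg_Suc_0)
  qed (simp add: 0)
next
  case (Suc s)
  then have "run w k s = run w' k s"
    using assms by (intro alg_cong_samples) auto
  then show ?thesis
    using Suc by (simp only: alg_Suc)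
qed

lemma alg_in_feasible:
  assumes "closed X" "X \<noteq> {}" "closed Y" "Y \<noteq> {}" "x0 \<in> X" "y0 \<in> Y"
  shows "sx (run w k t) \<in> X \<and> sy (run w k t) \<in> Y"
  by (induction k t rule: epoch_induct[where T=T])
    (use assms in \<open>simp_all add: Let_def closest_point_in_set\<close>)

lemma measurable_alg:
  fixes P :: "'a measure"
  assumes gx_meas: "(\<lambda>(x, y, \<xi>). gx x y \<xi>) \<in> borel_measurable (borel \<Otimes>\<^sub>M borel \<Otimes>\<^sub>M P)"
    and gy_meas: "(\<lambda>(x, y, \<xi>). gy x y \<xi>) \<in> borel_measurable (borel \<Otimes>\<^sub>M borel \<Otimes>\<^sub>M P)"
    and X: "closed X" "convex X" "X \<noteq> {}" and Y: "closed Y" "convex Y" "Y \<noteq> {}"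
    and anchor_meas[measurable]:
      "\<And>k i. (\<lambda>w. anchor_sample online data w k i) \<in> measurable (PiM UNIV (\<lambda>_. P)) P"
  shows "(\<lambda>w. sx (run w k t)) \<in> borel_measurable (PiM UNIV (\<lambda>_. P))
    \<and> (\<lambda>w. sy (run w k t)) \<in> borel_measurable (PiM UNIV (\<lambda>_. P))
    \<and> (\<lambda>w. sz (run w k t)) \<in> borel_measurable (PiM UNIV (\<lambda>_. P))
    \<and> (\<lambda>w. sGx (run w k t)) \<in> borel_measurable (PiM UNIV (\<lambda>_. P))
    \<and> (\<lambda>w. sGy (run w k t)) \<in> borel_measurable (PiM UNIV (\<lambda>_. P))"
proof -
  have [measurable]: "closest_point X \<in> borel_measurable borel" "closest_point Y \<in> borel_measurable borel"
    using X Y by (intro borel_measurable_continuous_onI continuous_on_closest_point; simp)+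
  have [measurable (raw)]: "(\<lambda>n. gx (f1 n) (f2 n) (h n)) \<in> borel_measurable N"
      "(\<lambda>n. gy (f1 n) (f2 n) (h n)) \<in> borel_measurable N"
    if "f1 \<in> borel_measurable N" "f2 \<in> borel_measurable N" "h \<in> measurable N P"
    for f1 :: "_ \<Rightarrow> 'x" and f2 :: "_ \<Rightarrow> 'y" and h and N :: "'b measure"
    by (fact borel_measurable_comp_split3[OF gx_meas that] borel_measurable_comp_split3[OF gy_meas that])+
  have anchor: "(\<lambda>w. sGx (run w k 0)) \<in> borel_measurable (PiM UNIV (\<lambda>_. P))
      \<and> (\<lambda>w. sGy (run w k 0)) \<in> borel_measurable (PiM UNIV (\<lambda>_. P))"
    if [measurable]: "(\<lambda>w. sx (run w k 0)) \<in> borel_measurable (PiM UNIV (\<lambda>_. P))"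
      "(\<lambda>w. sy (run w k 0)) \<in> borel_measurable (PiM UNIV (\<lambda>_. P))" for k
    unfolding alg_anchor by (intro conjI; measurable)
  show ?thesis
  proof (induction k t rule: epoch_induct[where T=T])
    case start
    then show ?case
      using anchor[of 0] by simp
  next
    case (restart k)
    then show ?case
      using anchor[of "Suc k"] by (simp only: alg_Suc_0)
  next
    case (step k t)
    then have [measurable]: "(\<lambda>w. sx (run w k t)) \<in> borel_measurable (PiM UNIV (\<lambda>_. P))"
      "(\<lambda>w. sy (run w k t)) \<in> borel_measurable (PiM UNIV (\<lambda>_. P))"
      "(\<lambda>w. sz (run w k t)) \<in> borel_measurable (PiM UNIV (\<lambda>_. P))"
      "(\<lambda>w. sGx (run w k t)) \<in> borel_measurable (PiM UNIV (\<lambda>_. P))"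
      "(\<lambda>w. sGy (run w k t)) \<in> borel_measurable (PiM UNIV (\<lambda>_. P))"
      by simp_all
    have [measurable]: "(\<lambda>w. sx (run w k (Suc t))) \<in> borel_measurable (PiM UNIV (\<lambda>_. P))"
      "(\<lambda>w. sy (run w k (Suc t))) \<in> borel_measurable (PiM UNIV (\<lambda>_. P))"
      unfolding alg_Suc(1,2) by measurable
    show ?case
      unfolding alg_Suc(3-5) by (intro conjI; measurable)
  qed
qed

lemma recursive_estimator_alg:
  fixes P :: "'a measure" and gFx :: "'x \<Rightarrow> 'y \<Rightarrow> 'x" and gFy :: "'x \<Rightarrow> 'y \<Rightarrow> 'y"
  assumes P: "prob_space P"
    and gx_meas: "(\<lambda>(x, y, \<xi>). gx x y \<xi>) \<in> borel_measurable (borel \<Otimes>\<^sub>M borel \<Otimes>\<^sub>M P)"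
    and gy_meas: "(\<lambda>(x, y, \<xi>). gy x y \<xi>) \<in> borel_measurable (borel \<Otimes>\<^sub>M borel \<Otimes>\<^sub>M P)"
    and gx_mean: "\<And>x y. integrable P (gx x y) \<and> (\<integral>\<xi>. gx x y \<xi> \<partial>P) = gFx x y"
    and gy_mean: "\<And>x y. integrable P (gy x y) \<and> (\<integral>\<xi>. gy x y \<xi> \<partial>P) = gFy x y"
    and X: "closed X" "convex X" "X \<noteq> {}" and Y: "closed Y" "convex Y" "Y \<noteq> {}"
    and init: "x0 \<in> X" "y0 \<in> Y"
    and anchor_space: "online \<or> space P = UNIV"
    and M: "M > 0"
  shows "recursive_estimator P gx gFx X Y
      (\<lambda>k t w. sx (run w k t)) (\<lambda>k t w. sy (run w k t)) (\<lambda>k t w. sGx (run w k t)) M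
    \<and> recursive_estimator P gy gFy X Y
      (\<lambda>k t w. sx (run w k t)) (\<lambda>k t w. sy (run w k t)) (\<lambda>k t w. sGy (run w k t)) M"
proof -
  note meas = measurable_alg[OF gx_meas gy_meas X Y measurable_anchor_sample[OF anchor_space]]
  note feasible = alg_in_feasible[OF X(1,3) Y(1,3) init]
  have sx_meas: "\<And>k t. (\<lambda>w. sx (run w k t)) \<in> borel_measurable (PiM UNIV (\<lambda>_. P))"
    and sy_meas: "\<And>k t. (\<lambda>w. sy (run w k t)) \<in> borel_measurable (PiM UNIV (\<lambda>_. P))"
    and sGx_meas: "\<And>k t. (\<lambda>w. sGx (run w k t)) \<in> borel_measurable (PiM UNIV (\<lambda>_. P))"
    and sGy_meas: "\<And>k t. (\<lambda>w. sGy (run w k t)) \<in> borel_measurable (PiM UNIV (\<lambda>_. P))"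
    using meas by blast+
  have sx_in: "\<And>k t w. sx (run w k t) \<in> X" and sy_in: "\<And>k t w. sy (run w k t) \<in> Y"
    using feasible by blast+
  have sx_adapted: "sx (run w k t) = sx (run w' k t)" and sy_adapted: "sy (run w k t) = sy (run w' k t)"
    if "\<And>k' t' i. k' < k \<or> k' = k \<and> t' < t \<Longrightarrow> w (k', t', i) = w' (k', t', i)" for w w' k t
    using alg_iterate_cong_samples[of k t w w'] that by simp_all
  have sG_adapted: "sGx (run w k t) = sGx (run w' k t)" "sGy (run w k t) = sGy (run w' k t)"
    if "\<And>k' t' i. k' < k \<or> k' = k \<and> t' \<le> t \<Longrightarrow> w (k', t', i) = w' (k', t', i)" for w w' k t
    using alg_cong_samples[of k t w w'] that by simp_all
  have gx_int: "\<And>x y. integrable P (gx x y)" and gx_eq: "\<And>x y. (\<integral>\<xi>. gx x y \<xi> \<partial>P) = gFx x y"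
    and gy_int: "\<And>x y. integrable P (gy x y)" and gy_eq: "\<And>x y. (\<integral>\<xi>. gy x y \<xi> \<partial>P) = gFy x y"
    using gx_mean gy_mean by simp_all
  show ?thesis
    by (intro conjI recursive_estimator.intro)
      (fact P gx_meas gy_meas gx_int gx_eq gy_int gy_eq sx_meas sy_meas sGx_meas sGy_meas sx_in sy_in
        sx_adapted sy_adapted sG_adapted alg_Suc(4,5) M)+
qed

end

text \<open>Pass from \<open>(x, y)\<close> to \<open>(x', y')\<close> through \<open>(x, y')\<close>, using \<open>(a + b)\<^sup>2 \<le> 2 a\<^sup>2 + 2 b\<^sup>2\<close>.\<close>
lemma nn_integral_sq_norm_diff_two_steps_le:
  fixes g :: "'x::euclidean_space \<Rightarrow> 'y::euclidean_space \<Rightarrow> 'a \<Rightarrow> 'z::euclidean_space"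
  assumes g_meas: "(\<lambda>(x, y, \<xi>). g x y \<xi>) \<in> borel_measurable (borel \<Otimes>\<^sub>M borel \<Otimes>\<^sub>M P)"
    and lip_x: "(\<integral>\<^sup>+\<xi>. ennreal ((norm (g x' y' \<xi> - g x y' \<xi>))\<^sup>2) \<partial>P) \<le> ennreal (Lx\<^sup>2 * (norm (x' - x))\<^sup>2)"
    and lip_y: "(\<integral>\<^sup>+\<xi>. ennreal ((norm (g x y' \<xi> - g x y \<xi>))\<^sup>2) \<partial>P) \<le> ennreal (Ly\<^sup>2 * (norm (y' - y))\<^sup>2)"
  shows "(\<integral>\<^sup>+\<xi>. ennreal ((norm (g x' y' \<xi> - g x y \<xi>))\<^sup>2) \<partial>P)
    \<le> ennreal (2 * Lx\<^sup>2 * (norm (x' - x))\<^sup>2) + ennreal (2 * Ly\<^sup>2 * (norm (y' - y))\<^sup>2)"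
proof -
  have [measurable]: "g a b \<in> borel_measurable P" for a b
    using borel_measurable_comp_split3[OF g_meas, of "\<lambda>_. a" P "\<lambda>_. b" "\<lambda>\<xi>. \<xi>"] by simp
  have pointwise: "(norm (u + v))\<^sup>2 \<le> 2 * (norm u)\<^sup>2 + 2 * (norm v)\<^sup>2" for u v :: 'z
  proof -
    have "(norm (u + v))\<^sup>2 \<le> (norm u + norm v)\<^sup>2"
      by (simp add: norm_triangle_ineq power_mono)
    also have "\<dots> \<le> 2 * (norm u)\<^sup>2 + 2 * (norm v)\<^sup>2"
      using sum_squares_bound[of "norm u" "norm v"] by (simp add: power2_sum)
    finally show ?thesis .
  qed
  have "(\<integral>\<^sup>+\<xi>. ennreal ((norm (g x' y' \<xi> - g x y \<xi>))\<^sup>2) \<partial>P)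
      \<le> (\<integral>\<^sup>+\<xi>. 2 * ennreal ((norm (g x' y' \<xi> - g x y' \<xi>))\<^sup>2)
          + 2 * ennreal ((norm (g x y' \<xi> - g x y \<xi>))\<^sup>2) \<partial>P)"
  proof (intro nn_integral_mono)
    fix \<xi>
    have "ennreal ((norm (g x' y' \<xi> - g x y \<xi>))\<^sup>2)
        \<le> ennreal (2 * (norm (g x' y' \<xi> - g x y' \<xi>))\<^sup>2 + 2 * (norm (g x y' \<xi> - g x y \<xi>))\<^sup>2)"
      using pointwise[of "g x' y' \<xi> - g x y' \<xi>" "g x y' \<xi> - g x y \<xi>"] by (intro ennreal_leI) simp
    then show "ennreal ((norm (g x' y' \<xi> - g x y \<xi>))\<^sup>2)
        \<le> 2 * ennreal ((norm (g x' y' \<xi> - g x y' \<xi>))\<^sup>2) + 2 * ennreal ((norm (g x y' \<xi> - g x y \<xi>))\<^sup>2)"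
      by (simp add: ennreal_plus ennreal_mult)
  qed
  also have "\<dots> = 2 * (\<integral>\<^sup>+\<xi>. ennreal ((norm (g x' y' \<xi> - g x y' \<xi>))\<^sup>2) \<partial>P)
      + 2 * (\<integral>\<^sup>+\<xi>. ennreal ((norm (g x y' \<xi> - g x y \<xi>))\<^sup>2) \<partial>P)"
    by (simp add: nn_integral_add nn_integral_cmult)
  also have "\<dots> \<le> 2 * ennreal (Lx\<^sup>2 * (norm (x' - x))\<^sup>2) + 2 * ennreal (Ly\<^sup>2 * (norm (y' - y))\<^sup>2)"
    by (intro add_mono mult_left_mono lip_x lip_y) simp_all
  finally show ?thesis
    by (simp add: ennreal_mult' mult.assoc)
qed

theorem lemmaA1:
  fixes X :: "'x::euclidean_space set" and Y :: "'y::euclidean_space set"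
    and P :: "'a measure"
    and f :: "'x \<Rightarrow> 'y \<Rightarrow> 'a \<Rightarrow> real"
    and gx :: "'x \<Rightarrow> 'y \<Rightarrow> 'a \<Rightarrow> 'x" and gy :: "'x \<Rightarrow> 'y \<Rightarrow> 'a \<Rightarrow> 'y"
    and gFx :: "'x \<Rightarrow> 'y \<Rightarrow> 'x" and gFy :: "'x \<Rightarrow> 'y \<Rightarrow> 'y"
    and DY ell Lx Ly \<rho> \<sigma>x \<sigma>y Flow Cx Cy ax ay \<beta> r :: real
    and K T M B N :: nat and online :: bool and data :: "nat \<Rightarrow> 'a"
    and x0 :: 'x and y0 :: 'y and z0 :: 'x
    and \<Omega> :: "(nat \<times> nat \<times> nat \<Rightarrow> 'a) measure"
    and xs :: "nat \<Rightarrow> nat \<Rightarrow> (nat \<times> nat \<times> nat \<Rightarrow> 'a) \<Rightarrow> 'x"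
    and ys :: "nat \<Rightarrow> nat \<Rightarrow> (nat \<times> nat \<times> nat \<Rightarrow> 'a) \<Rightarrow> 'y"
    and Gx :: "nat \<Rightarrow> nat \<Rightarrow> (nat \<times> nat \<times> nat \<Rightarrow> 'a) \<Rightarrow> 'x"
    and Gy :: "nat \<Rightarrow> nat \<Rightarrow> (nat \<times> nat \<times> nat \<Rightarrow> 'a) \<Rightarrow> 'y"
    and k \<tau> :: nat
  assumes X: "X \<noteq> {}" "closed X" "convex X"
    and Y: "Y \<noteq> {}" "closed Y" "convex Y"
    and P: "prob_space P"
    \<comment> \<open>measurability / integrability implicit in the use of expectations\<close>
    and f_meas: "(\<lambda>(x, y, \<xi>). f x y \<xi>) \<in> borel_measurable (borel \<Otimes>\<^sub>M borel \<Otimes>\<^sub>M P)"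
    and gx_meas: "(\<lambda>(x, y, \<xi>). gx x y \<xi>) \<in> borel_measurable (borel \<Otimes>\<^sub>M borel \<Otimes>\<^sub>M P)"
    and gy_meas: "(\<lambda>(x, y, \<xi>). gy x y \<xi>) \<in> borel_measurable (borel \<Otimes>\<^sub>M borel \<Otimes>\<^sub>M P)"
    and f_int: "\<And>x y. integrable P (f x y)"
    \<comment> \<open>gx, gy are the partial gradients of f(.,.;xi); gFx, gFy those of F\<close>
    and gx_grad: "\<And>x y \<xi>. ((\<lambda>u. f u y \<xi>) has_derivative (\<lambda>h. gx x y \<xi> \<bullet> h)) (at x)"
    and gy_grad: "\<And>x y \<xi>. ((\<lambda>v. f x v \<xi>) has_derivative (\<lambda>h. gy x y \<xi> \<bullet> h)) (at y)"
    and gFx_grad: "\<And>x y. ((\<lambda>u. Fexp P f u y) has_derivative (\<lambda>h. gFx x y \<bullet> h)) (at x)"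
    and gFy_grad: "\<And>x y. ((\<lambda>v. Fexp P f x v) has_derivative (\<lambda>h. gFy x y \<bullet> h)) (at y)"
    \<comment> \<open>(i)\<close>
    and A1: "compact Y" "DY = diameter Y"
    \<comment> \<open>(ii)\<close>
    and A2: "ell > 0" "\<And>x1 x2 y1 y2. x1 \<in> X \<Longrightarrow> x2 \<in> X \<Longrightarrow> y1 \<in> Y \<Longrightarrow> y2 \<in> Y \<Longrightarrow>
          (\<integral>\<^sup>+\<xi>. ennreal \<bar>f x1 y1 \<xi> - f x2 y2 \<xi>\<bar> \<partial>P) \<le> ennreal (ell * (norm (x1 - x2) + norm (y1 - y2)))"
    \<comment> \<open>(iii)\<close>
    and A3x: "\<And>x1 x2 y. x1 \<in> X \<Longrightarrow> x2 \<in> X \<Longrightarrow> y \<in> Y \<Longrightarrow>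
          (\<integral>\<^sup>+\<xi>. ennreal ((norm (gx x1 y \<xi> - gx x2 y \<xi>))\<^sup>2) \<partial>P) \<le> ennreal (Lx\<^sup>2 * (norm (x1 - x2))\<^sup>2)"
    and A3xy: "\<And>x y1 y2. x \<in> X \<Longrightarrow> y1 \<in> Y \<Longrightarrow> y2 \<in> Y \<Longrightarrow>
          (\<integral>\<^sup>+\<xi>. ennreal ((norm (gx x y1 \<xi> - gx x y2 \<xi>))\<^sup>2) \<partial>P) \<le> ennreal (Ly\<^sup>2 * (norm (y1 - y2))\<^sup>2)"
    and A3y: "\<And>x1 x2 y1 y2. x1 \<in> X \<Longrightarrow> x2 \<in> X \<Longrightarrow> y1 \<in> Y \<Longrightarrow> y2 \<in> Y \<Longrightarrow>
          (\<integral>\<^sup>+\<xi>. ennreal ((norm (gy x1 y1 \<xi> - gy x2 y2 \<xi>))\<^sup>2) \<partial>P)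
            \<le> ennreal (Ly\<^sup>2 * ((norm (x1 - x2))\<^sup>2 + (norm (y1 - y2))\<^sup>2))"
    \<comment> \<open>(iv)\<close>
    and A4: "\<And>y. y \<in> Y \<Longrightarrow> convex_on X (\<lambda>x. Fexp P f x y + \<rho> / 2 * (norm x)\<^sup>2)"
    \<comment> \<open>(v)\<close>
    and A5x: "\<And>x y. integrable P (gx x y) \<and> (\<integral>\<xi>. gx x y \<xi> \<partial>P) = gFx x y"
    and A5y: "\<And>x y. integrable P (gy x y) \<and> (\<integral>\<xi>. gy x y \<xi> \<partial>P) = gFy x y"
    and A5vx: "\<And>x y. (\<integral>\<^sup>+\<xi>. ennreal ((norm (gx x y \<xi> - gFx x y))\<^sup>2) \<partial>P) \<le> ennreal (\<sigma>x\<^sup>2)"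
    and A5vy: "\<And>x y. (\<integral>\<^sup>+\<xi>. ennreal ((norm (gy x y \<xi> - gFy x y))\<^sup>2) \<partial>P) \<le> ennreal (\<sigma>y\<^sup>2)"
    \<comment> \<open>(vi): max_y min_x F(x,y) >= Flow\<close>
    and A6: "\<exists>y\<in>Y. \<forall>x\<in>X. Fexp P f x y \<ge> Flow"
    \<comment> \<open>algorithm parameters and input\<close>
    and params: "K > 0" "T > 0" "M > 0" "B > 0" "ax > 0" "ay > 0" "\<beta> > 0" "r > 0"
    and init: "x0 \<in> X" "y0 \<in> Y"
    \<comment> \<open>finite-sum vs. online setting\<close>
    and setting: "(\<not> online \<and> N > 0 \<and> P = empirical N data \<and> B = N \<and> Cx = 0 \<and> Cy = 0)
                 \<or> (online \<and> Cx = \<sigma>x\<^sup>2 / real B \<and> Cy = \<sigma>y\<^sup>2 / real B)"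
    \<comment> \<open>all randomness: i.i.d. samples omega(k,tau,i) ~ P\<close>
    and Omega: "\<Omega> = PiM UNIV (\<lambda>_. P)"
    and iter: "xs = (\<lambda>k \<tau> \<omega>. sx (alg gx gy X Y ax ay \<beta> r T M B online data x0 y0 z0 \<omega> k \<tau>))"
              "ys = (\<lambda>k \<tau> \<omega>. sy (alg gx gy X Y ax ay \<beta> r T M B online data x0 y0 z0 \<omega> k \<tau>))"
              "Gx = (\<lambda>k \<tau> \<omega>. sGx (alg gx gy X Y ax ay \<beta> r T M B online data x0 y0 z0 \<omega> k \<tau>))"
              "Gy = (\<lambda>k \<tau> \<omega>. sGy (alg gx gy X Y ax ay \<beta> r T M B online data x0 y0 z0 \<omega> k \<tau>))"
    and idx: "k < K" "\<tau> \<le> T - 1"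
  shows "((\<integral>\<^sup>+\<omega>. ennreal ((norm (Gy k \<tau> \<omega> - gFy (xs k \<tau> \<omega>) (ys k \<tau> \<omega>)))\<^sup>2) \<partial>\<Omega>)
           \<le> ennreal (Ly\<^sup>2 / real M) * (\<Sum>b<\<tau>. \<integral>\<^sup>+\<omega>. ennreal ((norm (xs k (Suc b) \<omega> - xs k b \<omega>))\<^sup>2) \<partial>\<Omega>)
             + ennreal (Ly\<^sup>2 / real M) * (\<Sum>b<\<tau>. \<integral>\<^sup>+\<omega>. ennreal ((norm (ys k (Suc b) \<omega> - ys k b \<omega>))\<^sup>2) \<partial>\<Omega>)
             + ennreal Cy)
       \<and> ((\<integral>\<^sup>+\<omega>. ennreal ((norm (Gx k \<tau> \<omega> - gFx (xs k \<tau> \<omega>) (ys k \<tau> \<omega>)))\<^sup>2) \<partial>\<Omega>)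
           \<le> ennreal (2 * Lx\<^sup>2 / real M) * (\<Sum>b<\<tau>. \<integral>\<^sup>+\<omega>. ennreal ((norm (xs k (Suc b) \<omega> - xs k b \<omega>))\<^sup>2) \<partial>\<Omega>)
             + ennreal (2 * Ly\<^sup>2 / real M) * (\<Sum>b<\<tau>. \<integral>\<^sup>+\<omega>. ennreal ((norm (ys k (Suc b) \<omega> - ys k b \<omega>))\<^sup>2) \<partial>\<Omega>)
             + ennreal Cx)"
proof -
  have anchor_space: "online \<or> space P = UNIV"
    using setting by (auto simp: empirical_def)
  obtain est_x: "recursive_estimator P gx gFx X Y xs ys Gx M"
    and est_y: "recursive_estimator P gy gFy X Y xs ys Gy M"
    using alg_run.recursive_estimator_alg[OF P gx_meas gy_meas A5x A5y X(2,3,1) Y(2,3,1) init anchor_space params(3)]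
    unfolding iter by blast
  have lip_x: "(\<integral>\<^sup>+\<xi>. ennreal ((norm (gx x' y' \<xi> - gx x y \<xi>))\<^sup>2) \<partial>P)
      \<le> ennreal (2 * Lx\<^sup>2 * (norm (x' - x))\<^sup>2) + ennreal (2 * Ly\<^sup>2 * (norm (y' - y))\<^sup>2)"
    if "x \<in> X" "x' \<in> X" "y \<in> Y" "y' \<in> Y" for x x' y y'
    using that by (intro nn_integral_sq_norm_diff_two_steps_le[OF gx_meas] A3x A3xy)
  have lip_y: "(\<integral>\<^sup>+\<xi>. ennreal ((norm (gy x' y' \<xi> - gy x y \<xi>))\<^sup>2) \<partial>P)
      \<le> ennreal (Ly\<^sup>2 * (norm (x' - x))\<^sup>2) + ennreal (Ly\<^sup>2 * (norm (y' - y))\<^sup>2)"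
    if "x \<in> X" "x' \<in> X" "y \<in> Y" "y' \<in> Y" for x x' y y'
    using A3y[OF that(2,1,4,3)] by (simp add: distrib_left ennreal_plus)
  have anchor_x: "recursive_estimator.mse P gFx xs ys Gx k 0 \<le> ennreal Cx"
    using setting by (intro recursive_estimator.mse_anchor_le[OF est_x _ A5vx _ params(4)])
      (auto simp: iter alg_run.alg_anchor)
  have anchor_y: "recursive_estimator.mse P gFy xs ys Gy k 0 \<le> ennreal Cy"
    using setting by (intro recursive_estimator.mse_anchor_le[OF est_y _ A5vy _ params(4)])
      (auto simp: iter alg_run.alg_anchor)
  show ?thesis
    using recursive_estimator.mse_le_sum[OF est_y anchor_y lip_y, of \<tau>]
      recursive_estimator.mse_le_sum[OF est_x anchor_x lip_x, of \<tau>]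
    by (simp add: Omega recursive_estimator.mse_def[OF est_x] recursive_estimator.mse_def[OF est_y])
qed

end
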